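(* Consider an infinite-horizon discounted MDP with $V_{\max}=R_{\max}/(1-\gamma)$ whose action space $\mathcal{A}\subset\mathbb{R}^m$ is convex and compact with diameter $B$ and positive finite Lebesgue measure $\nu(\mathcal{A})$; all policies have densities with respect to the Lebesgue measure $\nu$. Let $\mathcal{F}$ be a class of functions $\mathcal{S}\times\mathcal{A}\to[0,V_{\max}]$. Run PSPI for $K$ iterations: $\pi_1(a\mid s)=1/\nu(\mathcal{A})$ for all $s,a$; at iteration $k$ the critic outputs some $f_k\in\mathcal{F}$ (possibly history-dependent) and $\pi_{k+1}(a\mid s)\propto\pi_k(a\mid s)\exp(\eta f_k(s,a))$. Assume $f_k(s,\cdot)$ is $L$-Lipschitz for all $k$ and $s$. Then with step size $\eta=\sqrt{8m\log K/(KV_{\max}^2)}$, for any comparator policy $\pi_{\mathrm{cp}}$, $$\frac{\mathrm{Reg}_K}{K}\le V_{\max}\sqrt{\frac{m\log K}{2K}}+\frac{LB}{K},\qquad \mathrm{Reg}_K=\sum_{k=1}^K\mathbb{E}_{s\sim d^{\pi_{\mathrm{cp}}}}\bigl[f_k(s,\pi_{\mathrm{cp}})-f_k(s,\pi_k)\bigr].$$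
   Context: $d^\pi(s)$ is the state marginal of the discounted occupancy $d^\pi(s,a)=(1-\gamma)\sum_{t\ge0}\gamma^t\Pr_\pi(s_t=s,a_t=a)$; $f(s,\pi)=\mathbb{E}_{a\sim\pi(\cdot|s)}f(s,a)$. Lipschitz continuity and diameter are with respect to the Euclidean norm on $\mathbb{R}^m$. *)

theory Defs
  imports "HOL-Analysis.Analysis" "HOL-Probability.Probability"
begin

text \<open>Policies are densities (w.r.t. Lebesgue measure lborel on real^'m) over actions,
  given as functions pi s a. The expected value f(s,pi) = E_{a ~ pi(.|s)} f(s,a).\<close>

definition pol_val :: "('s \<Rightarrow> 'a::euclidean_space \<Rightarrow> real) \<Rightarrow> ('s \<Rightarrow> 'a \<Rightarrow> real) \<Rightarrow> 's \<Rightarrow> real" where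
  "pol_val f pol s = (LINT a|lborel. pol s a * f s a)"

text \<open>PSPI policies, indexed as in the paper: pspi eta A f 1 = pi_1 (uniform on A),
  pspi eta A f (k+1) proportional to pspi eta A f k * exp(eta * f k).
  (Index 0 is unused; it is set to the uniform density as well.)\<close>

fun pspi :: "real \<Rightarrow> 'a::euclidean_space set \<Rightarrow> (nat \<Rightarrow> 's \<Rightarrow> 'a \<Rightarrow> real) \<Rightarrow> nat \<Rightarrow> 's \<Rightarrow> 'a \<Rightarrow> real" where
  "pspi \<eta> A f 0 = (\<lambda>s a. indicator A a / measure lborel A)"
| "pspi \<eta> A f (Suc 0) = (\<lambda>s a. indicator A a / measure lborel A)"
| "pspi \<eta> A f (Suc (Suc j)) =
     (\<lambda>s a. pspi \<eta> A f (Suc j) s a * exp (\<eta> * f (Suc j) s a) /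
            (LINT b|lborel. pspi \<eta> A f (Suc j) s b * exp (\<eta> * f (Suc j) s b)))"

text \<open>Marginal distribution of s_t under policy pol, initial distribution mu0 and
  transition kernel P (P s a is the distribution of the next state).\<close>

primrec state_dist :: "'s measure \<Rightarrow> ('s \<Rightarrow> 'a::euclidean_space \<Rightarrow> 's measure) \<Rightarrow> ('s \<Rightarrow> 'a \<Rightarrow> real) \<Rightarrow> nat \<Rightarrow> 's measure" where
  "state_dist mu0 P pol 0 = mu0"
| "state_dist mu0 P pol (Suc t) =
     state_dist mu0 P pol t \<bind> (\<lambda>s. density lborel (\<lambda>a. ennreal (pol s a)) \<bind> (\<lambda>a. P s a))"

text \<open>E_{s ~ d^pol}[g s] for the discounted state occupancy
  d^pol = (1-gamma) sum_t gamma^t Pr(s_t = .).\<close>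

definition occ_expect :: "real \<Rightarrow> 's measure \<Rightarrow> ('s \<Rightarrow> 'a::euclidean_space \<Rightarrow> 's measure) \<Rightarrow> ('s \<Rightarrow> 'a \<Rightarrow> real) \<Rightarrow> ('s \<Rightarrow> real) \<Rightarrow> real" where
  "occ_expect \<gamma> mu0 P pol g = (1 - \<gamma>) * (\<Sum>t. \<gamma> ^ t * (\<integral>s. g s \<partial>(state_dist mu0 P pol t)))"

end

(*
  In a fixed state s, PSPI is exponential weights over the action set A:
  pi_k(.|s) is proportional to 1_A exp(eta S_k) with S_k = f_1 + ... + f_(k-1).
  For the normalizers Z_k, Hoeffding's lemma gives
  ln Z_(k+1) - ln Z_k <= eta E_(pi_k) f_k + eta^2 V^2 / 8, which telescopes.
  Conversely, for every a in A the shrunk copy a + eps (A - a) of A has volume eps^m |A|,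
  and on it S_(K+1) >= S_(K+1)(a) - K L eps B by the Lipschitz bound, so
  ln Z_(K+1) >= m ln eps + ln |A| + eta (S_(K+1)(a) - K L eps B).
  Averaging the comparison over a under the comparator bounds the regret in state s by
  m ln(1/eps) / eta + K eta V^2 / 8 + K L eps B, i.e. by K V sqrt(m ln K / (2K)) + L B
  for eps = 1/K and the tuned eta. The regret of the theorem is the average of these
  per-state regrets under the discounted occupancy, a probability measure.
*)
theory Submission
  imports Defs
begin

section \<open>Densities on a set of actions\<close>

definition density_on :: "'a::euclidean_space set \<Rightarrow> ('a \<Rightarrow> real) \<Rightarrow> bool" where
  "density_on A w \<longleftrightarrow>
     integrable lborel w \<and> (\<forall>a. 0 \<le> w a) \<and> (\<forall>a. a \<notin> A \<longrightarrow> w a = 0) \<and> (LINT a|lborel. w a) = 1"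

lemma density_onI:
  "integrable lborel w \<Longrightarrow> (\<And>a. 0 \<le> w a) \<Longrightarrow> (\<And>a. a \<notin> A \<Longrightarrow> w a = 0) \<Longrightarrow>
    (LINT a|lborel. w a) = 1 \<Longrightarrow> density_on A w"
  by (simp add: density_on_def)

lemma
  assumes "density_on A w"
  shows density_on_integrable: "integrable lborel w"
    and density_on_measurable: "w \<in> borel_measurable lborel"
    and density_on_nonneg: "0 \<le> w a"
    and density_on_outside: "a \<notin> A \<Longrightarrow> w a = 0"
    and density_on_integral: "(LINT a|lborel. w a) = 1"
  using assms by (auto simp: density_on_def)

lemma density_on_integrable_mult:
  assumes w: "density_on A w" and h: "h \<in> borel_measurable lborel" and B: "\<And>a. a \<in> A \<Longrightarrow> \<bar>h a\<bar> \<le> B"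
  shows "integrable lborel (\<lambda>a. w a * h a)"
proof (rule Bochner_Integration.integrable_bound[of lborel "\<lambda>a. B * w a"])
  show "integrable lborel (\<lambda>a. B * w a)" using density_on_integrable[OF w] by simp
  show "(\<lambda>a. w a * h a) \<in> borel_measurable lborel"
    using density_on_measurable[OF w] h by measurable
  show "AE a in lborel. norm (w a * h a) \<le> norm (B * w a)"
  proof (rule AE_I2)
    fix a
    show "norm (w a * h a) \<le> norm (B * w a)"
    proof (cases "a \<in> A")
      case True
      then have "0 \<le> B" using B order_trans abs_ge_zero by blast
      then show ?thesis
        using mult_left_mono[OF B[OF True] density_on_nonneg[OF w]] density_on_nonneg[OF w, of a]
        by (simp add: abs_mult mult.commute)
    qed (simp add: density_on_outside[OF w])
  qed
qed

lemma density_on_integral_le: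
  assumes w: "density_on A w" and wh: "integrable lborel (\<lambda>a. w a * h a)" and d: "\<And>a. a \<in> A \<Longrightarrow> h a \<le> d"
  shows "(LINT a|lborel. w a * h a) \<le> d"
proof -
  have "(LINT a|lborel. w a * h a) \<le> (LINT a|lborel. w a * d)"
  proof (rule integral_mono)
    fix a
    show "w a * h a \<le> w a * d"
      using d[of a] density_on_nonneg[OF w, of a] density_on_outside[OF w, of a]
      by (cases "a \<in> A") (auto intro: mult_left_mono)
  qed (use wh density_on_integrable[OF w] in auto)
  then show ?thesis using density_on_integral[OF w] by simp
qed

lemma density_on_integral_ge:
  assumes w: "density_on A w" and wh: "integrable lborel (\<lambda>a. w a * h a)" and c: "\<And>a. a \<in> A \<Longrightarrow> c \<le> h a"
  shows "c \<le> (LINT a|lborel. w a * h a)"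
  using density_on_integral_le[OF w, of "\<lambda>a. - h a" "- c"] wh c by simp

lemma prob_space_density_on:
  assumes "density_on A w"
  shows "prob_space (density lborel (\<lambda>a. ennreal (w a)))"
proof (rule prob_spaceI)
  have "emeasure (density lborel (\<lambda>a. ennreal (w a))) UNIV = ennreal (LINT a|lborel. w a)"
    using density_on_measurable[OF assms] density_on_integrable[OF assms] density_on_nonneg[OF assms]
    by (simp add: emeasure_density nn_integral_eq_integral)
  then show "emeasure (density lborel (\<lambda>a. ennreal (w a))) (space (density lborel (\<lambda>a. ennreal (w a)))) = 1"
    using density_on_integral[OF assms] by simp
qed

lemma ln_integral_exp_le_hoeffding:
  assumes w: "density_on A w" and h: "h \<in> borel_measurable lborel"
    and range: "\<And>a. a \<in> A \<Longrightarrow> h a \<in> {c..d}" and \<eta>: "0 < \<eta>"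
  shows "ln (LINT a|lborel. w a * exp (\<eta> * h a)) \<le> \<eta> * (LINT a|lborel. w a * h a) + \<eta>\<^sup>2 * (d - c)\<^sup>2 / 8"
proof -
  define N where "N = density lborel (\<lambda>a. ennreal (w a))"
  note [measurable] = density_on_measurable[OF w] h
  note w_nonneg = density_on_nonneg[OF w]
  interpret interval_bounded_random_variable N h c d
  proof (intro interval_bounded_random_variable.intro interval_bounded_random_variable_axioms.intro)
    show "prob_space N" unfolding N_def by (rule prob_space_density_on[OF w])
    show "h \<in> borel_measurable N" unfolding N_def using h by simp
    have "0 < w a \<Longrightarrow> h a \<in> {c..d}" for a
      using density_on_outside[OF w, of a] range[of a] by (cases "a \<in> A") auto
    then show "AE a in N. h a \<in> {c..d}" unfolding N_def by (subst AE_density) auto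
  qed
  define E where "E = expectation h"
  have E: "E = (LINT a|lborel. w a * h a)"
    unfolding E_def N_def using h by (subst integral_density) (auto simp: w_nonneg)
  have exp_bounded: "AE a in N. norm (exp (\<eta> * (h a - E))) \<le> exp (\<eta> * (d - E))"
    using AE_in_interval by eventually_elim (use \<eta> in \<open>auto intro: mult_left_mono\<close>)
  have "ennreal (\<integral>a. exp (\<eta> * (h a - E)) \<partial>N) = (\<integral>\<^sup>+a. exp (\<eta> * (h a - E)) \<partial>N)"
    using integrable_const_bound[OF exp_bounded] by (intro nn_integral_eq_integral[symmetric]) auto
  also have "\<dots> \<le> ennreal (exp (\<eta>\<^sup>2 * (d - c)\<^sup>2 / 8))"
    unfolding E_def by (rule Hoeffdings_lemma_nn_integral[OF \<eta>])
  finally have bound: "(\<integral>a. exp (\<eta> * (h a - E)) \<partial>N) \<le> exp (\<eta>\<^sup>2 * (d - c)\<^sup>2 / 8)"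
    by (simp add: ennreal_le_iff)
  have shift: "(\<integral>a. exp (\<eta> * (h a - E)) \<partial>N) = (LINT a|lborel. w a * exp (\<eta> * h a)) * exp (- \<eta> * E)"
    unfolding N_def by (subst integral_density)
      (auto simp: w_nonneg right_diff_distrib exp_diff exp_minus field_simps)
  have "exp (\<eta> * c) \<le> (LINT a|lborel. w a * exp (\<eta> * h a))"
    using range \<eta> by (intro density_on_integral_ge[OF w] density_on_integrable_mult[OF w, of _ "exp (\<eta> * d)"])
      (auto intro: mult_left_mono)
  then have "0 < (LINT a|lborel. w a * exp (\<eta> * h a))"
    using exp_gt_zero order_less_le_trans by blast
  then have "ln (LINT a|lborel. w a * exp (\<eta> * h a)) - \<eta> * E = ln (\<integral>a. exp (\<eta> * (h a - E)) \<partial>N)"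
    unfolding shift by (simp add: ln_mult)
  also have "\<dots> \<le> \<eta>\<^sup>2 * (d - c)\<^sup>2 / 8"
    using bound \<open>0 < (LINT a|lborel. w a * exp (\<eta> * h a))\<close> unfolding shift
    by (subst ln_exp[symmetric]) (rule ln_mono; simp)
  finally show ?thesis unfolding E by simp
qed

lemma pol_val_bounds:
  assumes "density_on A (pol s)" and "f s \<in> borel_measurable lborel" and "\<And>a. a \<in> A \<Longrightarrow> f s a \<in> {0..V}"
  shows "pol_val f pol s \<in> {0..V}"
proof -
  have "integrable lborel (\<lambda>a. pol s a * f s a)"
    using assms by (intro density_on_integrable_mult[of A _ _ V]) auto
  then show ?thesis unfolding pol_val_def
    using assms by (auto intro: density_on_integral_le density_on_integral_ge)
qed

section \<open>Exponential weights in a single state\<close>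

lemma lipschitz_on_sum:
  fixes f :: "'i \<Rightarrow> 'a::metric_space \<Rightarrow> 'b::real_normed_vector"
  assumes "finite I" and "\<And>i. i \<in> I \<Longrightarrow> (C i)-lipschitz_on U (f i)"
  shows "(\<Sum>i\<in>I. C i)-lipschitz_on U (\<lambda>x. \<Sum>i\<in>I. f i x)"
  using assms by (induction I rule: finite_induct) (auto intro: lipschitz_on_add lipschitz_on_constant)

lemma integral_exp_lipschitz_ge:
  fixes A :: "'a::euclidean_space set" and g :: "'a \<Rightarrow> real"
  assumes A: "convex A" "compact A" and g: "C-lipschitz_on A g"
    and int: "integrable lborel (\<lambda>b. indicator A b * exp (\<eta> * g b))"
    and \<eta>: "0 \<le> \<eta>" and a0: "a0 \<in> A" and \<epsilon>: "0 < \<epsilon>" "\<epsilon> \<le> 1"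
  shows "\<epsilon> ^ DIM('a) * measure lborel A * exp (\<eta> * (g a0 - C * \<epsilon> * diameter A))
    \<le> (LINT b|lborel. indicator A b * exp (\<eta> * g b))"
proof -
  define T where "T = (\<lambda>x. \<epsilon> *\<^sub>R x + (1 - \<epsilon>) *\<^sub>R a0) ` A"
  have A_sets: "A \<in> sets lborel" using A by (simp add: compact_imp_closed borel_closed)
  have T_sub: "T \<subseteq> A" unfolding T_def using A a0 \<epsilon> by (auto simp: convex_def)
  have "compact T" unfolding T_def using A by (intro compact_continuous_image continuous_intros)
  then have T_sets: "T \<in> sets lborel" by (simp add: compact_imp_closed borel_closed)
  have T_fin: "emeasure lborel T < \<infinity>"
    using \<open>compact T\<close> by (intro emeasure_bounded_finite compact_imp_bounded)
  have "measure lebesgue T = \<epsilon> ^ DIM('a) * measure lebesgue A"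
    unfolding T_def using measure_lebesgue_affine[of \<epsilon> "(1 - \<epsilon>) *\<^sub>R a0" A] \<epsilon> by simp
  then have T_measure: "measure lborel T = \<epsilon> ^ DIM('a) * measure lborel A"
    using T_sets A_sets by simp
  have "g a0 - C * \<epsilon> * diameter A \<le> g b" if b: "b \<in> T" for b
  proof -
    obtain x where x: "x \<in> A" and b_eq: "b = \<epsilon> *\<^sub>R x + (1 - \<epsilon>) *\<^sub>R a0"
      using b unfolding T_def by auto
    have "dist b a0 = \<epsilon> * dist x a0"
      using \<epsilon> unfolding b_eq dist_norm by (simp add: algebra_simps flip: scaleR_diff_right)
    also have "\<dots> \<le> \<epsilon> * diameter A"
      using \<epsilon> x a0 A by (intro mult_left_mono diameter_bounded_bound compact_imp_bounded) auto
    finally have "C * dist b a0 \<le> C * (\<epsilon> * diameter A)"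
      using lipschitz_on_nonneg[OF g] by (rule mult_left_mono)
    moreover have "dist (g b) (g a0) \<le> C * dist b a0"
      using g b T_sub a0 by (auto intro: lipschitz_onD)
    ultimately show ?thesis by (simp add: dist_real_def)
  qed
  then have "exp (\<eta> * (g a0 - C * \<epsilon> * diameter A)) * indicator T b \<le> indicator A b * exp (\<eta> * g b)" for b
    using T_sub \<eta> by (auto simp: indicator_def intro: mult_left_mono)
  then have "(LINT b|lborel. exp (\<eta> * (g a0 - C * \<epsilon> * diameter A)) * indicator T b)
      \<le> (LINT b|lborel. indicator A b * exp (\<eta> * g b))"
    using int T_sets T_fin by (intro integral_mono) auto
  then show ?thesis using T_sets T_fin by (simp add: T_measure ac_simps)
qed

definition cum_value :: "(nat \<Rightarrow> 's \<Rightarrow> 'a \<Rightarrow> real) \<Rightarrow> 's \<Rightarrow> nat \<Rightarrow> 'a \<Rightarrow> real" where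
  "cum_value f s k a = (\<Sum>j\<in>{1..<k}. f j s a)"

definition exp_weight :: "real \<Rightarrow> 'a set \<Rightarrow> (nat \<Rightarrow> 's \<Rightarrow> 'a \<Rightarrow> real) \<Rightarrow> 's \<Rightarrow> nat \<Rightarrow> 'a \<Rightarrow> real" where
  "exp_weight \<eta> A f s k a = indicator A a * exp (\<eta> * cum_value f s k a)"

definition normalizer :: "real \<Rightarrow> 'a::euclidean_space set \<Rightarrow> (nat \<Rightarrow> 's \<Rightarrow> 'a \<Rightarrow> real) \<Rightarrow> 's \<Rightarrow> nat \<Rightarrow> real" where
  "normalizer \<eta> A f s k = (LINT a|lborel. exp_weight \<eta> A f s k a)"

lemma exp_weight_Suc:
  "1 \<le> k \<Longrightarrow> exp_weight \<eta> A f s k a * exp (\<eta> * f k s a) = exp_weight \<eta> A f s (Suc k) a"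
  by (simp add: exp_weight_def cum_value_def distrib_left flip: exp_add)

context
  fixes \<eta> V L :: real and A :: "'a::euclidean_space set" and f :: "nat \<Rightarrow> 's \<Rightarrow> 'a \<Rightarrow> real"
    and s :: 's and K :: nat
  assumes \<eta>: "0 \<le> \<eta>"
    and A_convex: "convex A" and A_compact: "compact A" and A_pos: "0 < emeasure lborel A"
    and f_meas: "\<And>j. j \<in> {1..K} \<Longrightarrow> f j s \<in> borel_measurable lborel"
    and f_range: "\<And>j a. j \<in> {1..K} \<Longrightarrow> a \<in> A \<Longrightarrow> f j s a \<in> {0..V}"
    and f_lip: "\<And>j. j \<in> {1..K} \<Longrightarrow> L-lipschitz_on A (f j s)"
begin

private lemma A_sets: "A \<in> sets borel"
  using A_compact by (simp add: compact_imp_closed borel_closed)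

private lemma A_finite: "emeasure lborel A < \<infinity>"
  using A_compact by (intro emeasure_bounded_finite compact_imp_bounded)

private lemma measure_A_pos: "0 < measure lborel A"
  using A_pos A_finite by (simp add: measure_def enn2real_positive_iff)

lemma cum_value_measurable: "k \<le> Suc K \<Longrightarrow> cum_value f s k \<in> borel_measurable lborel"
  unfolding cum_value_def[abs_def] using f_meas by (intro borel_measurable_sum) auto

lemma cum_value_range:
  assumes "k \<le> Suc K" "a \<in> A"
  shows "0 \<le> cum_value f s k a \<and> cum_value f s k a \<le> real (k - 1) * V"
proof
  show "0 \<le> cum_value f s k a" unfolding cum_value_def using assms f_range by (intro sum_nonneg) auto
  show "cum_value f s k a \<le> real (k - 1) * V"
    unfolding cum_value_def using assms f_range sum_bounded_above[of "{1..<k}" "\<lambda>j. f j s a" V] by auto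
qed

lemma exp_weight_measurable:
  assumes "k \<le> Suc K"
  shows "exp_weight \<eta> A f s k \<in> borel_measurable lborel"
proof -
  note [measurable] = A_sets cum_value_measurable[OF assms]
  show ?thesis unfolding exp_weight_def[abs_def] by measurable
qed

lemma exp_weight_bounds:
  "k \<le> Suc K \<Longrightarrow> indicator A a \<le> exp_weight \<eta> A f s k a \<and>
     exp_weight \<eta> A f s k a \<le> exp (\<eta> * (real (k - 1) * V)) * indicator A a"
  using cum_value_range[of k a] \<eta> by (auto simp: exp_weight_def indicator_def mult_left_mono)

lemma exp_weight_integrable:
  assumes k: "k \<le> Suc K"
  shows "integrable lborel (exp_weight \<eta> A f s k)"
proof (rule Bochner_Integration.integrable_bound)
  show "integrable lborel (\<lambda>a. exp (\<eta> * (real (k - 1) * V)) * indicator A a)"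
    using A_finite A_sets by (intro integrable_mult_right integrable_real_indicator) auto
  show "AE a in lborel. norm (exp_weight \<eta> A f s k a) \<le> norm (exp (\<eta> * (real (k - 1) * V)) * indicator A a)"
  proof (rule AE_I2)
    fix a
    show "norm (exp_weight \<eta> A f s k a) \<le> norm (exp (\<eta> * (real (k - 1) * V)) * indicator A a)"
      using exp_weight_bounds[OF k, of a] by (cases "a \<in> A") auto
  qed
qed (rule exp_weight_measurable[OF k])

lemma normalizer_pos:
  assumes k: "k \<le> Suc K"
  shows "0 < normalizer \<eta> A f s k"
proof -
  have "measure lborel A = (LINT a|lborel. indicator A a)"
    using A_finite A_sets by simp
  also have "\<dots> \<le> normalizer \<eta> A f s k" unfolding normalizer_def
    using exp_weight_integrable[OF k] exp_weight_bounds[OF k] A_finite A_sets by (intro integral_mono) auto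
  finally show ?thesis using measure_A_pos by linarith
qed

lemma normalizer_1: "normalizer \<eta> A f s 1 = measure lborel A"
  using A_finite A_sets by (simp add: normalizer_def exp_weight_def cum_value_def)

lemma pspi_eq_exp_weight:
  assumes "1 \<le> k" "k \<le> K"
  shows "pspi \<eta> A f k s = (\<lambda>a. exp_weight \<eta> A f s k a / normalizer \<eta> A f s k)"
  using assms
proof (induction k rule: nat_induct_at_least)
  case base
  then show ?case using normalizer_1 by (auto simp: exp_weight_def cum_value_def)
next
  case (Suc k)
  then obtain j where j: "k = Suc j" by (cases k) auto
  define W where "W = exp_weight \<eta> A f s"
  define Z where "Z = normalizer \<eta> A f s"
  have IH: "pspi \<eta> A f k s = (\<lambda>a. W k a / Z k)" using Suc unfolding W_def Z_def by auto
  have Z_pos: "0 < Z k" "0 < Z (Suc k)" using Suc.prems normalizer_pos unfolding Z_def by auto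
  have W_Suc: "W k a * exp (\<eta> * f k s a) = W (Suc k) a" for a
    unfolding W_def using Suc.hyps by (rule exp_weight_Suc)
  have "(LINT b|lborel. pspi \<eta> A f k s b * exp (\<eta> * f k s b)) = (LINT b|lborel. W (Suc k) b / Z k)"
    by (simp add: IH flip: W_Suc)
  also have "\<dots> = Z (Suc k) / Z k" by (simp add: Z_def W_def normalizer_def)
  finally have norm: "(LINT b|lborel. pspi \<eta> A f k s b * exp (\<eta> * f k s b)) = Z (Suc k) / Z k" .
  have "pspi \<eta> A f (Suc k) s =
      (\<lambda>a. pspi \<eta> A f k s a * exp (\<eta> * f k s a) / (LINT b|lborel. pspi \<eta> A f k s b * exp (\<eta> * f k s b)))"
    by (simp add: j)
  also have "\<dots> = (\<lambda>a. W (Suc k) a / Z (Suc k))"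
    unfolding norm using Z_pos by (simp add: IH fun_eq_iff field_simps flip: W_Suc)
  finally show ?case unfolding W_def Z_def .
qed

lemma density_on_pspi:
  assumes "k \<in> {1..K}"
  shows "density_on A (pspi \<eta> A f k s)"
proof -
  have k: "k \<le> Suc K" using assms by simp
  have Z: "0 < normalizer \<eta> A f s k" using normalizer_pos[OF k] .
  have "density_on A (\<lambda>a. exp_weight \<eta> A f s k a / normalizer \<eta> A f s k)"
  proof (rule density_onI)
    show "integrable lborel (\<lambda>a. exp_weight \<eta> A f s k a / normalizer \<eta> A f s k)"
      using exp_weight_integrable[OF k] by simp
    show "(LINT a|lborel. exp_weight \<eta> A f s k a / normalizer \<eta> A f s k) = 1"
      using Z by (simp add: normalizer_def)
  qed (use Z in \<open>auto simp: exp_weight_def\<close>)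
  then show ?thesis using assms by (simp add: pspi_eq_exp_weight)
qed

lemma integral_pspi_exp:
  assumes "k \<in> {1..K}"
  shows "(LINT a|lborel. pspi \<eta> A f k s a * exp (\<eta> * f k s a)) = normalizer \<eta> A f s (Suc k) / normalizer \<eta> A f s k"
  using assms
  by (simp add: pspi_eq_exp_weight normalizer_def[of _ _ _ _ "Suc k"] flip: exp_weight_Suc)

lemma ln_normalizer_Suc_le:
  assumes "0 < \<eta>" "k \<in> {1..K}"
  shows "ln (normalizer \<eta> A f s (Suc k)) - ln (normalizer \<eta> A f s k)
    \<le> \<eta> * (LINT a|lborel. pspi \<eta> A f k s a * f k s a) + \<eta>\<^sup>2 * V\<^sup>2 / 8"
proof -
  have "ln (normalizer \<eta> A f s (Suc k)) - ln (normalizer \<eta> A f s k)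
      = ln (LINT a|lborel. pspi \<eta> A f k s a * exp (\<eta> * f k s a))"
    using assms normalizer_pos[of k] normalizer_pos[of "Suc k"] by (simp add: integral_pspi_exp ln_div)
  also have "\<dots> \<le> \<eta> * (LINT a|lborel. pspi \<eta> A f k s a * f k s a) + \<eta>\<^sup>2 * (V - 0)\<^sup>2 / 8"
    using assms f_meas f_range by (intro ln_integral_exp_le_hoeffding[OF density_on_pspi]) auto
  finally show ?thesis by simp
qed

lemma normalizer_ge:
  assumes "a0 \<in> A" "0 < \<epsilon>" "\<epsilon> \<le> 1"
  shows "\<epsilon> ^ DIM('a) * measure lborel A * exp (\<eta> * (cum_value f s (Suc K) a0 - real K * L * \<epsilon> * diameter A))
    \<le> normalizer \<eta> A f s (Suc K)"
proof -
  have "(\<Sum>j\<in>{1..<Suc K}. L)-lipschitz_on A (cum_value f s (Suc K))"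
    unfolding cum_value_def[abs_def] using f_lip by (intro lipschitz_on_sum) auto
  then have "(real K * L)-lipschitz_on A (cum_value f s (Suc K))" by simp
  then show ?thesis unfolding normalizer_def exp_weight_def
    using A_convex A_compact exp_weight_integrable[of "Suc K"] \<eta> assms
    by (intro integral_exp_lipschitz_ge) (auto simp: exp_weight_def[abs_def])
qed

lemma regret_pointwise:
  assumes \<eta>_pos: "0 < \<eta>" and a0: "a0 \<in> A" and \<epsilon>: "0 < \<epsilon>" "\<epsilon> \<le> 1"
  shows "cum_value f s (Suc K) a0 - (\<Sum>k=1..K. LINT a|lborel. pspi \<eta> A f k s a * f k s a)
    \<le> - real DIM('a) * ln \<epsilon> / \<eta> + real K * \<eta> * V\<^sup>2 / 8 + real K * L * \<epsilon> * diameter A"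
proof -
  define Z where "Z = normalizer \<eta> A f s"
  define E where "E = (\<Sum>k=1..K. LINT a|lborel. pspi \<eta> A f k s a * f k s a)"
  define X where "X = cum_value f s (Suc K) a0"
  have "ln (Z (Suc K)) - ln (Z 1) = (\<Sum>k=1..K. ln (Z (Suc k)) - ln (Z k))"
    by (rule sum_Suc_diff[symmetric]) simp
  also have "\<dots> \<le> (\<Sum>k=1..K. \<eta> * (LINT a|lborel. pspi \<eta> A f k s a * f k s a) + \<eta>\<^sup>2 * V\<^sup>2 / 8)"
    unfolding Z_def using \<eta>_pos by (intro sum_mono ln_normalizer_Suc_le) auto
  also have "\<dots> = \<eta> * E + real K * (\<eta>\<^sup>2 * V\<^sup>2 / 8)"
    by (simp add: E_def sum.distrib sum_distrib_left)
  finally have upper: "ln (Z (Suc K)) - ln (measure lborel A) \<le> \<eta> * E + real K * (\<eta>\<^sup>2 * V\<^sup>2 / 8)"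
    unfolding Z_def normalizer_1 .
  have "real DIM('a) * ln \<epsilon> + ln (measure lborel A) + \<eta> * (X - real K * L * \<epsilon> * diameter A)
      = ln (\<epsilon> ^ DIM('a) * measure lborel A * exp (\<eta> * (X - real K * L * \<epsilon> * diameter A)))"
    using \<epsilon> measure_A_pos by (simp add: ln_mult ln_realpow)
  also have "\<dots> \<le> ln (Z (Suc K))"
    using normalizer_ge[OF a0 \<epsilon>] \<epsilon> measure_A_pos unfolding X_def Z_def by (intro ln_mono) auto
  finally have "\<eta> * (X - E) \<le> - real DIM('a) * ln \<epsilon> + real K * (\<eta>\<^sup>2 * V\<^sup>2 / 8) + \<eta> * (real K * L * \<epsilon> * diameter A)"
    using upper by (simp add: algebra_simps)
  then show ?thesis
    using \<eta>_pos unfolding E_def[symmetric] X_def[symmetric] by (simp add: field_simps power2_eq_square)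
qed

lemma regret_density:
  assumes \<eta>_pos: "0 < \<eta>" and \<epsilon>: "0 < \<epsilon>" "\<epsilon> \<le> 1" and p: "density_on A p"
  shows "(\<Sum>k=1..K. (LINT a|lborel. p a * f k s a) - (LINT a|lborel. pspi \<eta> A f k s a * f k s a))
    \<le> - real DIM('a) * ln \<epsilon> / \<eta> + real K * \<eta> * V\<^sup>2 / 8 + real K * L * \<epsilon> * diameter A"
proof -
  define E where "E = (\<Sum>k=1..K. LINT a|lborel. pspi \<eta> A f k s a * f k s a)"
  define C where "C = - real DIM('a) * ln \<epsilon> / \<eta> + real K * \<eta> * V\<^sup>2 / 8 + real K * L * \<epsilon> * diameter A"
  have p_f: "integrable lborel (\<lambda>a. p a * f k s a)" if "k \<in> {1..K}" for k
    using that f_meas f_range by (intro density_on_integrable_mult[OF p, of _ V]) auto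
  have "(\<Sum>k=1..K. LINT a|lborel. p a * f k s a) = (LINT a|lborel. p a * cum_value f s (Suc K) a)"
    using p_f by (simp add: cum_value_def sum_distrib_left atLeastLessThanSuc_atLeastAtMost
        flip: Bochner_Integration.integral_sum)
  also have "\<dots> \<le> E + C"
  proof (rule density_on_integral_le[OF p])
    show "integrable lborel (\<lambda>a. p a * cum_value f s (Suc K) a)"
      unfolding cum_value_def sum_distrib_left using p_f by (intro Bochner_Integration.integrable_sum) auto
    show "cum_value f s (Suc K) a \<le> E + C" if "a \<in> A" for a
      using regret_pointwise[OF \<eta>_pos that \<epsilon>] unfolding E_def C_def by simp
  qed
  finally show ?thesis unfolding E_def C_def by (simp add: sum_subtractf)
qed

end

lemma regret_pspi_tuned:
  fixes A :: "'a::euclidean_space set" and f :: "nat \<Rightarrow> 's \<Rightarrow> 'a \<Rightarrow> real"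
    and p :: "'s \<Rightarrow> 'a \<Rightarrow> real"
  assumes V: "0 < V" and K: "1 \<le> K"
    and A: "convex A" "compact A" "0 < emeasure lborel A"
    and f_meas: "\<And>j. j \<in> {1..K} \<Longrightarrow> f j s \<in> borel_measurable lborel"
    and f_range: "\<And>j a. j \<in> {1..K} \<Longrightarrow> a \<in> A \<Longrightarrow> f j s a \<in> {0..V}"
    and f_lip: "\<And>j. j \<in> {1..K} \<Longrightarrow> L-lipschitz_on A (f j s)"
    and p: "density_on A (p s)"
  shows "(\<Sum>k=1..K. pol_val (f k) p s - pol_val (f k) (pspi (sqrt (8 * real DIM('a) * ln (real K) / (real K * V\<^sup>2))) A f k) s)
    \<le> real K * (V * sqrt (real DIM('a) * ln (real K) / (2 * real K))) + L * diameter A"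
proof (cases "K = 1")
  case True
  text \<open>The tuned step size is \<open>0\<close> here; as \<open>\<pi>\<^sub>1\<close> does not depend on the step size,
    any positive step size may be used and sent to \<open>0\<close>.\<close>
  define G where "G = (LINT a|lborel. p s a * f 1 s a) - (LINT a|lborel. pspi 0 A f 1 s a * f 1 s a)"
  have "G \<le> L * diameter A + e" if e: "0 < e" for e
  proof -
    define \<eta> where "\<eta> = 8 * e / V\<^sup>2"
    have "0 < \<eta>" unfolding \<eta>_def using e V by simp
    then have "(\<Sum>k=1..K. (LINT a|lborel. p s a * f k s a) - (LINT a|lborel. pspi \<eta> A f k s a * f k s a))
        \<le> - real DIM('a) * ln 1 / \<eta> + real K * \<eta> * V\<^sup>2 / 8 + real K * L * 1 * diameter A"
      using A f_meas f_range f_lip p by (intro regret_density) auto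
    then show ?thesis using True V unfolding G_def \<eta>_def by simp
  qed
  then have "G \<le> L * diameter A" by (rule field_le_epsilon)
  then show ?thesis using True unfolding G_def pol_val_def by simp
next
  case False
  define r where "r = sqrt (real DIM('a) * ln (real K) / (2 * real K))"
  have "0 < ln (real K)" using K False by simp
  then have r: "0 < r" "r\<^sup>2 = real DIM('a) * ln (real K) / (2 * real K)" unfolding r_def using K by auto
  have \<eta>: "sqrt (8 * real DIM('a) * ln (real K) / (real K * V\<^sup>2)) = 4 * r / V"
  proof -
    have "8 * real DIM('a) * ln (real K) / (real K * V\<^sup>2) = (4 * r / V)\<^sup>2"
      using r V K by (simp add: field_simps power2_eq_square)
    then show ?thesis using r V by simp
  qed
  have "(\<Sum>k=1..K. (LINT a|lborel. p s a * f k s a) - (LINT a|lborel. pspi (4 * r / V) A f k s a * f k s a))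
      \<le> - real DIM('a) * ln (1 / real K) / (4 * r / V) + real K * (4 * r / V) * V\<^sup>2 / 8 + real K * L * (1 / real K) * diameter A"
    using V r K A f_meas f_range f_lip p by (intro regret_density) auto
  also have "\<dots> = real K * (V * r) + L * diameter A"
    using r V K by (simp add: ln_div field_simps power2_eq_square)
  finally show ?thesis unfolding pol_val_def \<eta> r_def .
qed

section \<open>Averaging over the discounted occupancy\<close>

lemma measurable_pspi:
  assumes "A \<in> sets borel"
    and "\<And>j. 1 \<le> j \<Longrightarrow> j < k \<Longrightarrow> (\<lambda>(s, a). f j s a) \<in> borel_measurable (M \<Otimes>\<^sub>M lborel)"
  shows "(\<lambda>(s, a). pspi \<eta> A f k s a) \<in> borel_measurable (M \<Otimes>\<^sub>M lborel)"
  using assms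
proof (induction \<eta> A f k rule: pspi.induct)
  case (3 \<eta> A f j)
  note [measurable] = "3.prems"(1)
  have [measurable]: "(\<lambda>(s, a). pspi \<eta> A f (Suc j) s a) \<in> borel_measurable (M \<Otimes>\<^sub>M lborel)"
    using 3 by simp
  have [measurable]: "(\<lambda>(s, a). f (Suc j) s a) \<in> borel_measurable (M \<Otimes>\<^sub>M lborel)"
    using "3.prems"(2) by simp
  have [measurable]: "(\<lambda>s. LINT b|lborel. pspi \<eta> A f (Suc j) s b * exp (\<eta> * f (Suc j) s b)) \<in> borel_measurable M"
    by (rule lborel.borel_measurable_lebesgue_integral) measurable
  show ?case by simp measurable
qed (simp_all, measurable)

lemma measurable_pol_val:
  assumes "(\<lambda>(s, a). f s a) \<in> borel_measurable (M \<Otimes>\<^sub>M lborel)"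
    and "(\<lambda>(s, a). pol s a) \<in> borel_measurable (M \<Otimes>\<^sub>M lborel)"
  shows "pol_val f pol \<in> borel_measurable M"
proof -
  note [measurable] = assms
  show ?thesis unfolding pol_val_def[abs_def] by (intro lborel.borel_measurable_lebesgue_integral) measurable
qed

lemma measurable_density_kernel:
  fixes pol :: "'s \<Rightarrow> 'a::euclidean_space \<Rightarrow> real"
  assumes pol: "(\<lambda>(s, a). pol s a) \<in> borel_measurable (M \<Otimes>\<^sub>M lborel)"
    and dens: "\<And>s. s \<in> space M \<Longrightarrow> density_on A (pol s)"
  shows "(\<lambda>s. density lborel (\<lambda>a. ennreal (pol s a))) \<in> M \<rightarrow>\<^sub>M prob_algebra lborel"
proof (intro measurable_prob_algebraI measurable_subprob_algebra)
  fix s assume s: "s \<in> space M"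
  show "prob_space (density lborel (\<lambda>a. ennreal (pol s a)))"
    using prob_space_density_on[OF dens[OF s]] .
  then show "subprob_space (density lborel (\<lambda>a. ennreal (pol s a)))"
    by (rule prob_space_imp_subprob_space)
next
  fix X :: "'a set" assume X: "X \<in> sets lborel"
  note [measurable] = pol X
  have "(\<lambda>s. \<integral>\<^sup>+a. ennreal (pol s a) * indicator X a \<partial>lborel) \<in> borel_measurable M"
    by (intro lborel.borel_measurable_nn_integral) measurable
  moreover have "emeasure (density lborel (\<lambda>a. ennreal (pol s a))) X
      = (\<integral>\<^sup>+a. ennreal (pol s a) * indicator X a \<partial>lborel)" if "s \<in> space M" for s
    using measurable_Pair2[OF pol that] X by (intro emeasure_density) simp_all
  ultimately show "(\<lambda>s. emeasure (density lborel (\<lambda>a. ennreal (pol s a))) X) \<in> borel_measurable M"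
    by (subst measurable_cong) auto
qed simp

lemma state_dist_in_prob_algebra:
  assumes mu0: "mu0 \<in> space (prob_algebra M)"
    and P: "(\<lambda>(s, a). P s a) \<in> M \<Otimes>\<^sub>M lborel \<rightarrow>\<^sub>M prob_algebra M"
    and pol: "(\<lambda>(s, a). pol s a) \<in> borel_measurable (M \<Otimes>\<^sub>M lborel)"
    and dens: "\<And>s. s \<in> space M \<Longrightarrow> density_on A (pol s)"
  shows "state_dist mu0 P pol t \<in> space (prob_algebra M)"
proof (induction t)
  case (Suc t)
  have "(\<lambda>s. density lborel (\<lambda>a. ennreal (pol s a)) \<bind> P s) \<in> M \<rightarrow>\<^sub>M prob_algebra M"
    using measurable_density_kernel[OF pol dens] P by (rule measurable_bind_prob_space2)
  then have "(\<lambda>\<mu>. \<mu> \<bind> (\<lambda>s. density lborel (\<lambda>a. ennreal (pol s a)) \<bind> P s)) \<in> prob_algebra M \<rightarrow>\<^sub>M prob_algebra M"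
    by (intro measurable_bind_prob_space[OF measurable_ident_sets[OF refl]])
  from measurable_space[OF this Suc] show ?case by simp
qed (simp add: mu0)

lemma prob_algebra_integral_bounded:
  fixes g :: "'s \<Rightarrow> real"
  assumes \<mu>: "\<mu> \<in> space (prob_algebra M)" and g: "g \<in> borel_measurable M"
    and B: "\<And>s. s \<in> space M \<Longrightarrow> \<bar>g s\<bar> \<le> B"
  shows "integrable \<mu> g" and "\<bar>\<integral>s. g s \<partial>\<mu>\<bar> \<le> B"
proof -
  interpret prob_space \<mu> using \<mu> by (simp add: space_prob_algebra)
  have sets: "sets \<mu> = sets M" using \<mu> by (simp add: space_prob_algebra)
  have "AE s in \<mu>. norm (g s) \<le> B"
    using B sets_eq_imp_space_eq[OF sets] by (intro AE_I2) simp
  moreover have "g \<in> borel_measurable \<mu>" using g by (simp add: measurable_cong_sets[OF sets refl])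
  ultimately show int: "integrable \<mu> g" by (rule integrable_const_bound)
  have "\<bar>\<integral>s. g s \<partial>\<mu>\<bar> \<le> (\<integral>s. \<bar>g s\<bar> \<partial>\<mu>)" using integral_abs_bound .
  also have "\<dots> \<le> B"
    using int \<open>AE s in \<mu>. norm (g s) \<le> B\<close> by (intro integral_le_const) auto
  finally show "\<bar>\<integral>s. g s \<partial>\<mu>\<bar> \<le> B" .
qed

lemma prob_algebra_integral_le:
  fixes g :: "'s \<Rightarrow> real"
  assumes \<mu>: "\<mu> \<in> space (prob_algebra M)" and "integrable \<mu> g" and "\<And>s. s \<in> space M \<Longrightarrow> g s \<le> C"
  shows "(\<integral>s. g s \<partial>\<mu>) \<le> C"
proof -
  interpret prob_space \<mu> using \<mu> by (simp add: space_prob_algebra)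
  have "space \<mu> = space M" using \<mu> by (intro sets_eq_imp_space_eq) (simp add: space_prob_algebra)
  then show ?thesis using assms(2,3) by (intro integral_le_const AE_I2) auto
qed

context
  fixes \<gamma> :: real and mu0 :: "'s measure" and M :: "'s measure" and P pol
  assumes \<gamma>: "0 \<le> \<gamma>" "\<gamma> < 1"
    and state_dist: "\<And>t. state_dist mu0 P pol t \<in> space (prob_algebra M)"
begin

lemma summable_discounted_integral:
  assumes "g \<in> borel_measurable M" and "\<And>s. s \<in> space M \<Longrightarrow> \<bar>g s\<bar> \<le> B"
  shows "summable (\<lambda>t. \<gamma> ^ t * (\<integral>s. g s \<partial>state_dist mu0 P pol t))"
proof (rule summable_comparison_test')
  show "summable (\<lambda>t. B * \<gamma> ^ t)" using \<gamma> by (intro summable_mult summable_geometric) auto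
  show "norm (\<gamma> ^ t * (\<integral>s. g s \<partial>state_dist mu0 P pol t)) \<le> B * \<gamma> ^ t" for t
    using mult_left_mono[OF prob_algebra_integral_bounded(2)[OF state_dist assms], of "\<gamma> ^ t"] \<gamma>
    by (simp add: abs_mult mult.commute)
qed

lemma occ_expect_sum:
  assumes "finite I" and g: "\<And>i. i \<in> I \<Longrightarrow> g i \<in> borel_measurable M"
    and B: "\<And>i s. i \<in> I \<Longrightarrow> s \<in> space M \<Longrightarrow> \<bar>g i s\<bar> \<le> B"
  shows "(\<Sum>i\<in>I. occ_expect \<gamma> mu0 P pol (g i)) = occ_expect \<gamma> mu0 P pol (\<lambda>s. \<Sum>i\<in>I. g i s)"
proof -
  have "(\<Sum>i\<in>I. \<Sum>t. \<gamma> ^ t * (\<integral>s. g i s \<partial>state_dist mu0 P pol t))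
      = (\<Sum>t. \<Sum>i\<in>I. \<gamma> ^ t * (\<integral>s. g i s \<partial>state_dist mu0 P pol t))"
    using g B by (intro suminf_sum[symmetric] summable_discounted_integral) auto
  also have "\<dots> = (\<Sum>t. \<gamma> ^ t * (\<integral>s. (\<Sum>i\<in>I. g i s) \<partial>state_dist mu0 P pol t))"
    using prob_algebra_integral_bounded(1)[OF state_dist g B]
    by (simp add: Bochner_Integration.integral_sum sum_distrib_left)
  finally show ?thesis by (simp add: occ_expect_def flip: sum_distrib_left)
qed

lemma occ_expect_le:
  assumes g: "g \<in> borel_measurable M" and B: "\<And>s. s \<in> space M \<Longrightarrow> \<bar>g s\<bar> \<le> B"
    and C: "\<And>s. s \<in> space M \<Longrightarrow> g s \<le> C"
  shows "occ_expect \<gamma> mu0 P pol g \<le> C"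
proof -
  have integral_le: "(\<integral>s. g s \<partial>state_dist mu0 P pol t) \<le> C" for t
    using prob_algebra_integral_bounded(1)[OF state_dist g B] C by (rule prob_algebra_integral_le[OF state_dist])
  have "(\<Sum>t. \<gamma> ^ t * (\<integral>s. g s \<partial>state_dist mu0 P pol t)) \<le> (\<Sum>t. \<gamma> ^ t * C)"
  proof (rule suminf_le)
    show "\<gamma> ^ t * (\<integral>s. g s \<partial>state_dist mu0 P pol t) \<le> \<gamma> ^ t * C" for t
      using integral_le \<gamma> by (intro mult_left_mono) auto
    show "summable (\<lambda>t. \<gamma> ^ t * C)" using \<gamma> by (intro summable_mult2 summable_geometric) auto
  qed (rule summable_discounted_integral[OF g B])
  also have "(\<Sum>t. \<gamma> ^ t * C) = 1 / (1 - \<gamma>) * C"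
    using \<gamma> by (intro sums_unique[symmetric] sums_mult2 geometric_sums) auto
  finally have "(1 - \<gamma>) * (\<Sum>t. \<gamma> ^ t * (\<integral>s. g s \<partial>state_dist mu0 P pol t)) \<le> (1 - \<gamma>) * (1 / (1 - \<gamma>) * C)"
    using \<gamma> by (intro mult_left_mono) auto
  then show ?thesis using \<gamma> by (simp add: occ_expect_def)
qed

end

context
  fixes M :: "'s measure" and A :: "'a::euclidean_space set" and V L :: real
    and f :: "nat \<Rightarrow> 's \<Rightarrow> 'a \<Rightarrow> real" and p :: "'s \<Rightarrow> 'a \<Rightarrow> real" and K :: nat
  assumes A_convex: "convex A" and A_compact: "compact A" and A_pos: "0 < emeasure lborel A"
    and f_joint: "\<And>k. k \<in> {1..K} \<Longrightarrow> (\<lambda>(s, a). f k s a) \<in> borel_measurable (M \<Otimes>\<^sub>M lborel)"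
    and f_range: "\<And>k s a. k \<in> {1..K} \<Longrightarrow> s \<in> space M \<Longrightarrow> a \<in> A \<Longrightarrow> f k s a \<in> {0..V}"
    and f_lip: "\<And>k s. k \<in> {1..K} \<Longrightarrow> s \<in> space M \<Longrightarrow> L-lipschitz_on A (f k s)"
    and p_meas: "(\<lambda>(s, a). p s a) \<in> borel_measurable (M \<Otimes>\<^sub>M lborel)"
    and p_dens: "\<And>s. s \<in> space M \<Longrightarrow> density_on A (p s)"
begin

private lemma f_section_measurable: "k \<in> {1..K} \<Longrightarrow> s \<in> space M \<Longrightarrow> f k s \<in> borel_measurable lborel"
  using measurable_Pair2[OF f_joint] by simp

lemma pol_val_gap_measurable:
  "k \<in> {1..K} \<Longrightarrow> (\<lambda>s. pol_val (f k) p s - pol_val (f k) (pspi \<eta> A f k) s) \<in> borel_measurable M"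
  using A_compact f_joint p_meas
  by (intro borel_measurable_diff measurable_pol_val measurable_pspi) (auto simp: compact_imp_closed)

lemma pol_val_gap_bounded:
  assumes "0 \<le> \<eta>" "k \<in> {1..K}" "s \<in> space M"
  shows "\<bar>pol_val (f k) p s - pol_val (f k) (pspi \<eta> A f k) s\<bar> \<le> V"
proof -
  have "density_on A (pspi \<eta> A f k s)"
    using assms A_convex A_compact A_pos f_section_measurable f_range f_lip
    by (intro density_on_pspi[where V=V and L=L and K=K]) auto
  then show ?thesis
    using pol_val_bounds[where pol=p and f="f k", OF p_dens f_section_measurable f_range]
      pol_val_bounds[where pol="pspi \<eta> A f k" and f="f k", OF _ f_section_measurable f_range] assms
    by fastforce
qed

lemma regret_pspi_occupancy:
  assumes \<gamma>: "0 \<le> \<gamma>" "\<gamma> < 1" and mu0: "mu0 \<in> space (prob_algebra M)"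
    and P: "(\<lambda>(s, a). P s a) \<in> M \<Otimes>\<^sub>M lborel \<rightarrow>\<^sub>M prob_algebra M"
    and V: "0 < V" and K: "1 \<le> K"
  defines "\<eta> \<equiv> sqrt (8 * real DIM('a) * ln (real K) / (real K * V\<^sup>2))"
  shows "(\<Sum>k=1..K. occ_expect \<gamma> mu0 P p (\<lambda>s. pol_val (f k) p s - pol_val (f k) (pspi \<eta> A f k) s))
    \<le> real K * (V * sqrt (real DIM('a) * ln (real K) / (2 * real K))) + L * diameter A"
proof -
  define g where "g k s = pol_val (f k) p s - pol_val (f k) (pspi \<eta> A f k) s" for k s
  have \<eta>: "0 \<le> \<eta>" unfolding \<eta>_def using K by simp
  have state_dist: "state_dist mu0 P p t \<in> space (prob_algebra M)" for t
    using mu0 P p_meas p_dens by (rule state_dist_in_prob_algebra)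
  have g_bounded: "\<bar>g k s\<bar> \<le> V" if "k \<in> {1..K}" "s \<in> space M" for k s
    unfolding g_def using pol_val_gap_bounded[OF \<eta> that] .
  have "(\<Sum>k=1..K. occ_expect \<gamma> mu0 P p (g k)) = occ_expect \<gamma> mu0 P p (\<lambda>s. \<Sum>k=1..K. g k s)"
    using \<gamma> state_dist pol_val_gap_measurable g_bounded unfolding g_def by (intro occ_expect_sum[where B=V]) auto
  also have "\<dots> \<le> real K * (V * sqrt (real DIM('a) * ln (real K) / (2 * real K))) + L * diameter A"
  proof (rule occ_expect_le[OF \<gamma> state_dist])
    show "\<bar>\<Sum>k=1..K. g k s\<bar> \<le> real K * V" if "s \<in> space M" for s
      using order_trans[OF sum_abs sum_bounded_above[of "{1..K}" "\<lambda>k. \<bar>g k s\<bar>" V]] g_bounded that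
      by simp
    show "(\<Sum>k=1..K. g k s) \<le> real K * (V * sqrt (real DIM('a) * ln (real K) / (2 * real K))) + L * diameter A"
      if "s \<in> space M" for s
      using regret_pspi_tuned[where p=p and f=f and s=s, OF V K A_convex A_compact A_pos
          f_section_measurable[OF _ that] f_range[OF _ that] f_lip[OF _ that] p_dens[OF that]]
      unfolding g_def \<eta>_def .
  qed (use pol_val_gap_measurable in \<open>auto simp: g_def\<close>)
  finally show ?thesis unfolding g_def .
qed

end

theorem theoremB1:
  fixes M :: "'s measure"
    and mu0 :: "'s measure"
    and P :: "'s \<Rightarrow> real^'m \<Rightarrow> 's measure"
    and \<gamma> Rmax Vmax L :: real
    and A :: "(real^'m) set"
    and F :: "('s \<Rightarrow> real^'m \<Rightarrow> real) set"
    and f :: "nat \<Rightarrow> 's \<Rightarrow> real^'m \<Rightarrow> real"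
    and pcp :: "'s \<Rightarrow> real^'m \<Rightarrow> real"
    and K :: nat
  assumes gamma: "0 \<le> \<gamma>" "\<gamma> < 1"
    and Rmax: "0 < Rmax"
    and Vmax: "Vmax = Rmax / (1 - \<gamma>)"
    and mu0: "mu0 \<in> space (prob_algebra M)"
    and P_kernel: "(\<lambda>(s, a). P s a) \<in> M \<Otimes>\<^sub>M lborel \<rightarrow>\<^sub>M prob_algebra M"
    and A_convex: "convex A" and A_compact: "compact A"
    and A_pos: "0 < emeasure lborel A" and A_fin: "emeasure lborel A < \<infinity>"
    and F_range: "\<And>g s a. g \<in> F \<Longrightarrow> s \<in> space M \<Longrightarrow> a \<in> A \<Longrightarrow> 0 \<le> g s a \<and> g s a \<le> Vmax"
    and F_meas: "\<And>g. g \<in> F \<Longrightarrow> (\<lambda>(s, a). g s a) \<in> borel_measurable (M \<Otimes>\<^sub>M lborel)"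
    and f_in_F: "\<And>k. k \<in> {1..K} \<Longrightarrow> f k \<in> F"
    and f_lip: "\<And>k s. k \<in> {1..K} \<Longrightarrow> s \<in> space M \<Longrightarrow> L-lipschitz_on A (f k s)"
    and pcp_meas: "(\<lambda>(s, a). pcp s a) \<in> borel_measurable (M \<Otimes>\<^sub>M lborel)"
    and pcp_nonneg: "\<And>s a. 0 \<le> pcp s a"
    and pcp_supp: "\<And>s a. a \<notin> A \<Longrightarrow> pcp s a = 0"
    and pcp_int: "\<And>s. s \<in> space M \<Longrightarrow> integrable lborel (pcp s) \<and> (LINT a|lborel. pcp s a) = 1"
    and K: "1 \<le> K"
  shows "(let m = real CARD('m);
              \<eta> = sqrt (8 * m * ln (real K) / (real K * Vmax\<^sup>2));
              Reg = (\<Sum>k = 1..K. occ_expect \<gamma> mu0 P pcp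
                        (\<lambda>s. pol_val (f k) pcp s - pol_val (f k) (pspi \<eta> A f k) s))
          in Reg / real K \<le> Vmax * sqrt (m * ln (real K) / (2 * real K)) + L * diameter A / real K)"
proof -
  have "0 < Vmax" using Rmax gamma Vmax by simp
  moreover have "(\<lambda>(s, a). f k s a) \<in> borel_measurable (M \<Otimes>\<^sub>M lborel)" if "k \<in> {1..K}" for k
    using F_meas f_in_F that by blast
  moreover have "f k s a \<in> {0..Vmax}" if "k \<in> {1..K}" "s \<in> space M" "a \<in> A" for k s a
    using F_range f_in_F that by auto
  moreover have "density_on A (pcp s)" if "s \<in> space M" for s
    using pcp_nonneg pcp_supp pcp_int[OF that] by (auto intro: density_onI)
  ultimately have "(\<Sum>k=1..K. occ_expect \<gamma> mu0 P pcp
        (\<lambda>s. pol_val (f k) pcp s - pol_val (f k) (pspi (sqrt (8 * real CARD('m) * ln (real K) / (real K * Vmax\<^sup>2))) A f k) s))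
      \<le> real K * (Vmax * sqrt (real CARD('m) * ln (real K) / (2 * real K))) + L * diameter A"
    using regret_pspi_occupancy[OF A_convex A_compact A_pos _ _ f_lip pcp_meas _ gamma mu0 P_kernel _ K]
    by simp
  then show ?thesis using K unfolding Let_def by (simp add: field_simps)
qed

end
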